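(* For any input distribution $\mathcal{D}$, and any $n,k\ge1$, $p\in[0,1]$, there is a deterministic selection algorithm in the rank query model that runs in $k$ rounds, has success probability at least $p$, and issues at most $np\bigl(1-\frac{k-1}{2k}p\bigr)+1$ queries in expectation when the input is drawn from $\mathcal{D}$.
   Context: Selection with rank queries: there is a vector $\vec{x}=(x_1,\ldots,x_n)$ whose ranks form a permutation of $\{1,\ldots,n\}$; a rank $r\in\{1,\ldots,n\}$ is given and the goal is to output the index $i$ with $\mathrm{rank}(x_i)=r$. Queries have the form "How is $\mathrm{rank}(x_j)$ compared to $m$?", with answer "$<$", "$=$" or "$>$". An algorithm runs in $k$ rounds if in each of $k$ rounds it submits a set of queries chosen depending only on answers of earlier rounds, then receives all answers. An input distribution is a probability distribution over rank permutations (with $r$ given); the algorithm may depend on $\mathcal{D}$. *)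

theory Defs
  imports "HOL-Probability.Probability" "HOL-Combinatorics.Permutations"
begin

text \<open>Rank query model. An input is a rank permutation sigma of {1..n}
  (sigma i = rank of x_i). A query (j, m) asks how rank(x_j) compares to m.\<close>

datatype cmp = Lt | Eq | Gt

definition answer :: "(nat \<Rightarrow> nat) \<Rightarrow> nat \<times> nat \<Rightarrow> cmp" where
  "answer \<sigma> q = (if \<sigma> (fst q) < snd q then Lt else if \<sigma> (fst q) = snd q then Eq else Gt)"

text \<open>A history lists, for each completed round, the answers to the queries of that
  round (None for pairs not queried in that round).\<close>
type_synonym history = "((nat \<times> nat) \<Rightarrow> cmp option) list"

record algorithm =
  alg_queries :: "history \<Rightarrow> (nat \<times> nat) set"
  alg_output :: "history \<Rightarrow> nat"

fun hist :: "algorithm \<Rightarrow> (nat \<Rightarrow> nat) \<Rightarrow> nat \<Rightarrow> history" where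
  "hist A \<sigma> 0 = []"
| "hist A \<sigma> (Suc t) =
     (let h = hist A \<sigma> t; Q = alg_queries A h
      in h @ [(\<lambda>q. if q \<in> Q then Some (answer \<sigma> q) else None)])"

definition valid_alg :: "nat \<Rightarrow> algorithm \<Rightarrow> bool" where
  "valid_alg n A \<longleftrightarrow> (\<forall>h. finite (alg_queries A h) \<and> fst ` alg_queries A h \<subseteq> {1..n})"

definition num_queries :: "algorithm \<Rightarrow> nat \<Rightarrow> (nat \<Rightarrow> nat) \<Rightarrow> nat" where
  "num_queries A k \<sigma> = (\<Sum>t<k. card (alg_queries A (hist A \<sigma> t)))"

definition succeeds :: "algorithm \<Rightarrow> nat \<Rightarrow> nat \<Rightarrow> nat \<Rightarrow> (nat \<Rightarrow> nat) \<Rightarrow> bool" where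
  "succeeds A n k r \<sigma> \<longleftrightarrow>
     (let i = alg_output A (hist A \<sigma> k) in i \<in> {1..n} \<and> \<sigma> i = r)"

end

theory Submission
  imports Defs
begin

text \<open>Let \<open>q j = Pr[rank(x_j) = r]\<close> and list the indices as \<open>\<pi> 0, \<pi> 1, \<dots>\<close> in order of
  decreasing \<open>q\<close>. The algorithm scans this list, querying "rank(x_{\<pi> i}) vs r" for
  \<open>\<lceil>t c\<rceil> \<le> i < \<lceil>(t+1) c\<rceil>\<close> in round \<open>t\<close>, where \<open>c = np/k\<close>, and stops as soon as an answer
  is "=". Since the \<open>q (\<pi> i)\<close> decrease and sum to 1, the first \<open>M\<close> candidates contain
  rank \<open>r\<close> with probability at least \<open>M/n\<close>. Hence the \<open>\<lceil>kc\<rceil> \<ge> np\<close> candidates of all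
  rounds succeed with probability at least \<open>p\<close>, and the queries of round \<open>t\<close> are paid only
  with probability at most \<open>1 - tp/k\<close>; summation by parts turns this into the bound.\<close>

lemma length_hist [simp]: "length (hist A \<sigma> t) = t"
  by (induction t) (simp_all add: Let_def)

lemma hist_records_answer:
  assumes "f \<in> set (hist A \<sigma> t)" and "f q = Some c"
  shows "c = answer \<sigma> q \<and> (\<exists>h. q \<in> alg_queries A h)"
  using assms by (induction t) (auto simp: Let_def split: if_splits)

definition rank_found :: "nat \<Rightarrow> history \<Rightarrow> bool" where
  "rank_found r h \<longleftrightarrow> (\<exists>f\<in>set h. \<exists>j. f (j, r) = Some Eq)"

definition scan_alg :: "(nat \<Rightarrow> nat) \<Rightarrow> (nat \<Rightarrow> nat) \<Rightarrow> nat \<Rightarrow> algorithm" where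
  "scan_alg \<pi> m r =
    \<lparr>alg_queries = (\<lambda>h. if rank_found r h then {}
       else (\<lambda>i. (\<pi> i, r)) ` {m (length h)..<m (Suc (length h))}),
     alg_output = (\<lambda>h. SOME j. \<exists>f\<in>set h. f (j, r) = Some Eq)\<rparr>"

lemma alg_queries_scan_alg:
  "alg_queries (scan_alg \<pi> m r) h = (if rank_found r h then {}
     else (\<lambda>i. (\<pi> i, r)) ` {m (length h)..<m (Suc (length h))})"
  by (simp add: scan_alg_def)

lemma rank_found_snoc:
  "rank_found r (h @ [f]) \<longleftrightarrow> rank_found r h \<or> (\<exists>j. f (j, r) = Some Eq)"
  by (auto simp: rank_found_def)

lemma rank_found_hist_scan_alg:
  assumes "mono m" and "m 0 = 0"
  shows "rank_found r (hist (scan_alg \<pi> m r) \<sigma> t) \<longleftrightarrow> (\<exists>i<m t. \<sigma> (\<pi> i) = r)"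
proof (induction t)
  case 0
  show ?case by (simp add: assms(2) rank_found_def)
next
  case (Suc t)
  let ?h = "hist (scan_alg \<pi> m r) \<sigma> t"
  have "rank_found r (hist (scan_alg \<pi> m r) \<sigma> (Suc t)) \<longleftrightarrow>
      rank_found r ?h \<or> (\<exists>i\<in>{m t..<m (Suc t)}. \<sigma> (\<pi> i) = r)"
    by (auto simp: Let_def rank_found_snoc alg_queries_scan_alg answer_def split: if_splits)
  moreover have "m t \<le> m (Suc t)"
    using \<open>mono m\<close> by (simp add: monoD)
  then have "{..<m (Suc t)} = {..<m t} \<union> {m t..<m (Suc t)}"
    by auto
  ultimately show ?case
    using Suc.IH by auto
qed

lemma valid_scan_alg:
  assumes "\<And>i. i < n \<Longrightarrow> \<pi> i \<in> {1..n}" and "\<And>t. m t \<le> n"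
  shows "valid_alg n (scan_alg \<pi> m r)"
proof -
  have "\<pi> i \<in> {1..n}" if "i < m t" for i t
    using assms that by (meson order_less_le_trans)
  then show ?thesis
    by (auto simp: valid_alg_def alg_queries_scan_alg)
qed

lemma succeeds_scan_alg:
  assumes "valid_alg n (scan_alg \<pi> m r)" and "mono m" and "m 0 = 0"
    and "\<exists>i<m k. \<sigma> (\<pi> i) = r"
  shows "succeeds (scan_alg \<pi> m r) n k r \<sigma>"
proof -
  let ?A = "scan_alg \<pi> m r"
  let ?h = "hist ?A \<sigma> k"
  have "rank_found r ?h"
    using rank_found_hist_scan_alg[OF assms(2,3)] assms(4) by blast
  then have "\<exists>j. \<exists>f\<in>set ?h. f (j, r) = Some Eq"
    by (auto simp: rank_found_def)
  then obtain f where f: "f \<in> set ?h" "f (alg_output ?A ?h, r) = Some Eq"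
    using someI_ex[of "\<lambda>j. \<exists>f\<in>set ?h. f (j, r) = Some Eq"] by (auto simp: scan_alg_def)
  from hist_records_answer[OF f] obtain h where
    "answer \<sigma> (alg_output ?A ?h, r) = Eq" "(alg_output ?A ?h, r) \<in> alg_queries ?A h"
    by metis
  with assms(1) show ?thesis
    by (force simp: succeeds_def valid_alg_def answer_def split: if_splits)
qed

lemma card_queries_scan_alg:
  assumes "mono m" and "m 0 = 0" and "inj_on \<pi> {..<n}" and "m (Suc t) \<le> n"
  shows "card (alg_queries (scan_alg \<pi> m r) (hist (scan_alg \<pi> m r) \<sigma> t)) =
    (if \<exists>i<m t. \<sigma> (\<pi> i) = r then 0 else m (Suc t) - m t)"
proof -
  have "inj_on (\<lambda>i. (\<pi> i, r)) {m t..<m (Suc t)}"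
    using assms(3,4) by (auto simp: inj_on_def)
  then show ?thesis
    by (simp add: alg_queries_scan_alg rank_found_hist_scan_alg[OF assms(1,2)] card_image)
      blast
qed

lemma exists_antimono_enumeration:
  fixes q :: "nat \<Rightarrow> 'a::linorder"
  obtains \<pi> where "bij_betw \<pi> {..<n} {1..n}"
    and "\<And>i j. i \<le> j \<Longrightarrow> j < n \<Longrightarrow> q (\<pi> j) \<le> q (\<pi> i)"
proof -
  define xs where "xs = rev (sort_key q [1..<Suc n])"
  have xs: "distinct xs" "length xs = n" "set xs = {1..n}"
    by (auto simp: xs_def)
  then have "bij_betw ((!) xs) {..<n} {1..n}"
    by (intro bij_betw_nth) auto
  moreover have sorted: "sorted_wrt (\<lambda>a b. q b \<le> q a) xs"
    using sorted_sort_key[of q "[1..<Suc n]"] by (simp add: xs_def sorted_wrt_rev sorted_wrt_map)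
  have "q (xs ! j) \<le> q (xs ! i)" if "i \<le> j" "j < n" for i j
    using that xs(2) sorted_wrt_nth_less[OF sorted, of i j] by (cases "i = j") auto
  ultimately show ?thesis
    using that by blast
qed

lemma prob_exists_rank_eq_sum:
  assumes "\<And>\<sigma>. \<sigma> \<in> set_pmf D \<Longrightarrow> inj \<sigma>" and "finite J"
  shows "measure_pmf.prob D {\<sigma>. \<exists>j\<in>J. \<sigma> j = r} = (\<Sum>j\<in>J. measure_pmf.prob D {\<sigma>. \<sigma> j = r})"
proof -
  let ?E = "\<lambda>j. {\<sigma>. \<sigma> j = r} \<inter> set_pmf D"
  have "disjoint_family_on ?E J"
    using assms(1) by (auto simp: disjoint_family_on_def dest: injD)
  have "measure_pmf.prob D {\<sigma>. \<exists>j\<in>J. \<sigma> j = r} =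
      measure_pmf.prob D ({\<sigma>. \<exists>j\<in>J. \<sigma> j = r} \<inter> set_pmf D)"
    by (simp add: measure_Int_set_pmf)
  also have "{\<sigma>. \<exists>j\<in>J. \<sigma> j = r} \<inter> set_pmf D = (\<Union>j\<in>J. ?E j)"
    by auto
  also have "measure_pmf.prob D (\<Union>j\<in>J. ?E j) = (\<Sum>j\<in>J. measure_pmf.prob D (?E j))"
    using \<open>disjoint_family_on ?E J\<close>
    by (intro measure_pmf.finite_measure_finite_Union) (auto simp: assms(2))
  finally show ?thesis
    by (simp add: measure_Int_set_pmf)
qed

lemma prefix_sum_ge_average:
  fixes a :: "nat \<Rightarrow> real"
  assumes "\<And>i j. i \<le> j \<Longrightarrow> j < n \<Longrightarrow> a j \<le> a i" and "M \<le> n"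
  shows "real M * (\<Sum>i<n. a i) \<le> real n * (\<Sum>i<M. a i)"
proof -
  have split: "(\<Sum>i<n. a i) = (\<Sum>i<M. a i) + (\<Sum>j\<in>{M..<n}. a j)"
    using assms(2) by (metis atLeast0LessThan sum.atLeastLessThan_concat zero_le)
  have "real M * (\<Sum>j\<in>{M..<n}. a j) = (\<Sum>i<M. \<Sum>j\<in>{M..<n}. a j)"
    by simp
  also have "\<dots> \<le> (\<Sum>i<M. \<Sum>j\<in>{M..<n}. a i)"
    by (intro sum_mono) (use assms(1) in auto)
  also have "\<dots> = (real n - real M) * (\<Sum>i<M. a i)"
    using assms(2) by (simp add: sum_distrib_left of_nat_diff)
  finally show ?thesis
    unfolding split by (simp add: algebra_simps)
qed

lemma prob_greedy_prefix_ge: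
  assumes "\<And>\<sigma>. \<sigma> \<in> set_pmf D \<Longrightarrow> \<sigma> permutes {1..n}" and "r \<in> {1..n}"
    and "bij_betw \<pi> {..<n} {1..n}"
    and "\<And>i j. i \<le> j \<Longrightarrow> j < n \<Longrightarrow>
      measure_pmf.prob D {\<sigma>. \<sigma> (\<pi> j) = r} \<le> measure_pmf.prob D {\<sigma>. \<sigma> (\<pi> i) = r}"
    and "M \<le> n"
  shows "real M / real n \<le> measure_pmf.prob D {\<sigma>. \<exists>i<M. \<sigma> (\<pi> i) = r}"
proof -
  let ?q = "\<lambda>i. measure_pmf.prob D {\<sigma>. \<sigma> (\<pi> i) = r}"
  have prefix: "measure_pmf.prob D {\<sigma>. \<exists>i<N. \<sigma> (\<pi> i) = r} = (\<Sum>i<N. ?q i)" if "N \<le> n" for N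
  proof -
    have "inj_on \<pi> {..<N}"
      using assms(3) that by (auto simp: bij_betw_def intro: inj_on_subset)
    moreover have "measure_pmf.prob D {\<sigma>. \<exists>j\<in>\<pi> ` {..<N}. \<sigma> j = r} =
        (\<Sum>j\<in>\<pi> ` {..<N}. measure_pmf.prob D {\<sigma>. \<sigma> j = r})"
      using assms(1) by (intro prob_exists_rank_eq_sum) (auto intro: permutes_inj)
    moreover have "{\<sigma>. \<exists>i<N. \<sigma> (\<pi> i) = r} = {\<sigma>. \<exists>j\<in>\<pi> ` {..<N}. \<sigma> j = r}"
      by auto
    ultimately show ?thesis
      by (simp add: sum.reindex)
  qed
  have "\<exists>i<n. \<sigma> (\<pi> i) = r" if "\<sigma> \<in> set_pmf D" for \<sigma>
  proof -
    have \<sigma>: "\<sigma> permutes {1..n}"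
      using assms(1) that .
    have "inv \<sigma> r \<in> {1..n}"
      using permutes_in_image[OF permutes_inv[OF \<sigma>]] assms(2) by simp
    moreover have "\<sigma> (inv \<sigma> r) = r"
      using permutes_inverses(1)[OF \<sigma>] .
    ultimately show ?thesis
      using assms(3) by (metis bij_betw_iff_bijections lessThan_iff)
  qed
  then have "measure_pmf.prob D {\<sigma>. \<exists>i<n. \<sigma> (\<pi> i) = r} = 1"
    by (simp add: measure_pmf.prob_eq_1 AE_measure_pmf_iff)
  with prefix have "(\<Sum>i<n. ?q i) = 1"
    by simp
  moreover have "real M * (\<Sum>i<n. ?q i) \<le> real n * (\<Sum>i<M. ?q i)"
    using assms(4,5) by (rule prefix_sum_ge_average)
  moreover have "n > 0"
    using assms(2) by simp
  ultimately show ?thesis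
    using prefix[OF assms(5)] by (simp add: divide_le_eq mult.commute)
qed

lemma expected_queries_scan_alg:
  assumes "finite (set_pmf D)" and "mono m" and "m 0 = 0" and "inj_on \<pi> {..<n}"
    and "\<And>t. m t \<le> n"
  shows "measure_pmf.expectation D (\<lambda>\<sigma>. real (num_queries (scan_alg \<pi> m r) k \<sigma>)) =
    (\<Sum>t<k. real (m (Suc t) - m t) * (1 - measure_pmf.prob D {\<sigma>. \<exists>i<m t. \<sigma> (\<pi> i) = r}))"
proof -
  let ?E = "\<lambda>t. {\<sigma>. \<exists>i<m t. \<sigma> (\<pi> i) = r}"
  let ?d = "\<lambda>t. real (m (Suc t) - m t)"
  have num: "(\<lambda>\<sigma>. real (num_queries (scan_alg \<pi> m r) k \<sigma>)) =
      (\<lambda>\<sigma>. \<Sum>t<k. ?d t * indicator (UNIV - ?E t) \<sigma>)"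
    unfolding num_queries_def of_nat_sum
    by (intro ext sum.cong) (auto simp: card_queries_scan_alg[OF assms(2-5)] indicator_def)
  have "measure_pmf.expectation D (\<lambda>\<sigma>. real (num_queries (scan_alg \<pi> m r) k \<sigma>)) =
      measure_pmf.expectation D (\<lambda>\<sigma>. \<Sum>t<k. ?d t * indicator (UNIV - ?E t) \<sigma>)"
    by (simp only: num)
  also have "\<dots> = (\<Sum>t<k. measure_pmf.expectation D (\<lambda>\<sigma>. ?d t * indicator (UNIV - ?E t) \<sigma>))"
    by (intro Bochner_Integration.integral_sum integrable_measure_pmf_finite assms(1))
  also have "\<dots> = (\<Sum>t<k. ?d t * (1 - measure_pmf.prob D (?E t)))"
    using measure_pmf.prob_compl[of _ D] by simp
  finally show ?thesis .
qed

definition schedule :: "nat \<Rightarrow> real \<Rightarrow> nat \<Rightarrow> nat" where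
  "schedule n c t = min n (nat \<lceil>real t * c\<rceil>)"

lemma schedule_0 [simp]: "schedule n c 0 = 0"
  by (simp add: schedule_def)

lemma schedule_le: "schedule n c t \<le> n"
  by (simp add: schedule_def)

lemma mono_schedule:
  assumes "0 \<le> c"
  shows "mono (schedule n c)"
proof
  fix t t' :: nat
  assume "t \<le> t'"
  then have "real t * c \<le> real t' * c"
    using assms by (simp add: mult_right_mono)
  then show "schedule n c t \<le> schedule n c t'"
    unfolding schedule_def by (intro min.mono order.refl nat_mono ceiling_mono)
qed

lemma schedule_bounds:
  assumes "0 \<le> c" and "real k * c \<le> real n" and "t \<le> k"
  shows "real t * c \<le> real (schedule n c t)" and "real (schedule n c t) \<le> real t * c + 1"
proof -
  have "real t * c \<le> real n"
    using assms by (meson mult_right_mono of_nat_mono order_trans)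
  then have "schedule n c t = nat \<lceil>real t * c\<rceil>"
    by (simp add: schedule_def ceiling_le)
  then have "real (schedule n c t) = of_int \<lceil>real t * c\<rceil>"
    using assms(1) by simp
  then show "real t * c \<le> real (schedule n c t)" and "real (schedule n c t) \<le> real t * c + 1"
    by (simp_all add: le_of_int_ceiling of_int_ceiling_le_add_one)
qed

lemma sum_increments_mult_linear:
  fixes m :: "nat \<Rightarrow> real"
  assumes "m 0 = 0"
  shows "(\<Sum>t<K. (m (Suc t) - m t) * (1 - a * real t)) =
    m K * (1 - a * (real K - 1)) + a * (\<Sum>t<K. m t)"
  by (induction K) (simp_all add: assms algebra_simps)

lemma sum_le_arith_series:
  fixes m :: "nat \<Rightarrow> real"
  assumes "m 0 = 0" and "\<And>t. t < K \<Longrightarrow> m t \<le> real t * c + 1" and "1 \<le> K"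
  shows "(\<Sum>t<K. m t) \<le> c * real K * (real K - 1) / 2 + real K - 1"
  using assms(3,2)
proof (induction K rule: nat_induct_at_least)
  case base
  then show ?case by (simp add: assms(1))
next
  case (Suc K)
  have "(\<Sum>t<K. m t) \<le> c * real K * (real K - 1) / 2 + real K - 1"
    using Suc by simp
  moreover have "m K \<le> real K * c + 1"
    using Suc.prems by simp
  ultimately have "(\<Sum>t<Suc K. m t) \<le> c * real K * (real K - 1) / 2 + real K - 1 + (real K * c + 1)"
    by simp
  then show ?case
    by (simp add: field_simps)
qed

lemma schedule_cost_bound:
  fixes m :: "nat \<Rightarrow> real" and x p :: real
  assumes "1 \<le> k" and "0 \<le> p" and "p \<le> 1" and "m 0 = 0"
    and "\<And>t. t \<le> k \<Longrightarrow> m t \<le> real t * (x * p / real k) + 1"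
  shows "(\<Sum>t<k. (m (Suc t) - m t) * (1 - p / real k * real t)) \<le>
    x * p * (1 - (real k - 1) / (2 * real k) * p) + 1"
proof -
  define a where "a = p / real k"
  have "0 \<le> a"
    using assms(2) by (simp add: a_def)
  have "a * (real k - 1) \<le> a * real k"
    using \<open>0 \<le> a\<close> by (simp add: mult_left_mono)
  also have "\<dots> = p"
    using assms(1) by (simp add: a_def)
  finally have coeff: "0 \<le> 1 - a * (real k - 1)"
    using assms(3) by simp
  have m_le: "m t \<le> real t * (x * a) + 1" if "t \<le> k" for t
    using assms(5)[OF that] by (simp add: a_def)
  have "(\<Sum>t<k. (m (Suc t) - m t) * (1 - a * real t)) =
      m k * (1 - a * (real k - 1)) + a * (\<Sum>t<k. m t)"
    using assms(4) by (rule sum_increments_mult_linear)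
  also have "\<dots> \<le> (real k * (x * a) + 1) * (1 - a * (real k - 1))
      + a * ((x * a) * real k * (real k - 1) / 2 + real k - 1)"
    using assms(1,4) m_le \<open>0 \<le> a\<close> coeff
    by (intro add_mono mult_right_mono mult_left_mono sum_le_arith_series) auto
  also have "\<dots> = x * p * (1 - (real k - 1) / (2 * real k) * p) + 1"
    using assms(1) by (simp add: a_def field_simps)
  finally show ?thesis
    by (simp add: a_def)
qed

theorem proposition9:
  fixes n k r :: nat and p :: real and D :: "(nat \<Rightarrow> nat) pmf"
  assumes "n \<ge> 1" and "k \<ge> 1" and "0 \<le> p" and "p \<le> 1"
    and "r \<in> {1..n}"
    and "\<forall>\<sigma> \<in> set_pmf D. \<sigma> permutes {1..n}"
  shows "\<exists>A. valid_alg n A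
    \<and> measure_pmf.prob D {\<sigma>. succeeds A n k r \<sigma>} \<ge> p
    \<and> measure_pmf.expectation D (\<lambda>\<sigma>. real (num_queries A k \<sigma>))
        \<le> real n * p * (1 - (real k - 1) / (2 * real k) * p) + 1"
proof -
  obtain \<pi> where \<pi>: "bij_betw \<pi> {..<n} {1..n}" and greedy: "\<And>i j. i \<le> j \<Longrightarrow> j < n \<Longrightarrow>
      measure_pmf.prob D {\<sigma>. \<sigma> (\<pi> j) = r} \<le> measure_pmf.prob D {\<sigma>. \<sigma> (\<pi> i) = r}"
    using exists_antimono_enumeration[of n "\<lambda>j. measure_pmf.prob D {\<sigma>. \<sigma> j = r}"] by blast
  define c where "c = real n * p / real k"
  define m where "m = schedule n c"
  define A where "A = scan_alg \<pi> m r"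
  have c: "0 \<le> c" "real k * c \<le> real n"
    using assms(2-4) by (simp_all add: c_def mult_left_le)
  have m: "mono m" "m 0 = 0" "\<And>t. m t \<le> n"
    using c by (simp_all add: m_def mono_schedule schedule_le)
  have increment: "real (m (Suc t) - m t) = real (m (Suc t)) - real (m t)" for t
    using m(1) by (simp add: monoD of_nat_diff)
  have found: "p / real k * real t \<le> measure_pmf.prob D {\<sigma>. \<exists>i<m t. \<sigma> (\<pi> i) = r}"
    if "t \<le> k" for t
  proof -
    have "p / real k * real t \<le> real (m t) / real n"
      using schedule_bounds(1)[OF c that] assms(1) by (simp add: m_def c_def field_simps)
    also have "\<dots> \<le> measure_pmf.prob D {\<sigma>. \<exists>i<m t. \<sigma> (\<pi> i) = r}"
      using assms(5,6) \<pi> greedy m(3) by (intro prob_greedy_prefix_ge) auto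
    finally show ?thesis .
  qed
  have valid: "valid_alg n A"
    unfolding A_def using \<pi> m(3) by (intro valid_scan_alg) (auto simp: bij_betw_def)
  have "p \<le> measure_pmf.prob D {\<sigma>. \<exists>i<m k. \<sigma> (\<pi> i) = r}"
    using found[of k] assms(2) by simp
  also have "\<dots> \<le> measure_pmf.prob D {\<sigma>. succeeds A n k r \<sigma>}"
    using succeeds_scan_alg[OF valid[unfolded A_def] m(1,2)] unfolding A_def
    by (intro measure_pmf.finite_measure_mono) auto
  finally have success: "p \<le> measure_pmf.prob D {\<sigma>. succeeds A n k r \<sigma>}" .
  have "finite (set_pmf D)"
    using assms(6) by (intro finite_subset[OF _ finite_permutations[of "{1..n}"]]) auto
  then have "measure_pmf.expectation D (\<lambda>\<sigma>. real (num_queries A k \<sigma>)) =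
      (\<Sum>t<k. real (m (Suc t) - m t) * (1 - measure_pmf.prob D {\<sigma>. \<exists>i<m t. \<sigma> (\<pi> i) = r}))"
    unfolding A_def using m \<pi> by (intro expected_queries_scan_alg) (auto simp: bij_betw_def)
  also have "\<dots> \<le> (\<Sum>t<k. real (m (Suc t) - m t) * (1 - p / real k * real t))"
    using found by (intro sum_mono mult_left_mono) auto
  also have "\<dots> \<le> real n * p * (1 - (real k - 1) / (2 * real k) * p) + 1"
    unfolding increment
    using assms(2-4) schedule_bounds(2)[OF c]
    by (intro schedule_cost_bound) (auto simp: m_def c_def)
  finally show ?thesis
    using valid success by blast
qed

end
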